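(* Under the triangle scaling property, for every $T\ge1$ the generic accelerated Bregman proximal point method satisfies $$d(\lambda^* )-d(\lambda_T)\le\Big[\prod_{k=0}^{T-1}(1-\theta_k)\Big]\big(d(\lambda^* )-d(\lambda_0)+AD_h(\lambda^*,\lambda_0)\big),$$ and $$\frac{1}{\big(1+\sqrt{A/G}\sum_{k=0}^{T-1}\sqrt{\eta_k}\big)^2}\le\prod_{k=0}^{T-1}(1-\theta_k)\le\frac{1}{\big(1+\tfrac12\sqrt{A/G}\sum_{k=0}^{T-1}\sqrt{\eta_k}\big)^2}.$$
   Context: $\Lambda\subseteq\mathbb{R}^m$ closed convex, $d:\Lambda\to\mathbb{R}$ concave with a maximizer $\lambda^*\in\Lambda$. $h$ strictly convex, continuously differentiable on $\Lambda$, $D_h(\lambda,\tilde\lambda)=h(\lambda)-h(\tilde\lambda)-\nabla h(\tilde\lambda)^\top(\lambda-\tilde\lambda)$. Triangle scaling property with constant $G>0$: $D_h((1-\theta)\lambda+\theta\lambda_1,(1-\theta)\lambda+\theta\lambda_2)\le G\theta^2D_h(\lambda_1,\lambda_2)$ for all $\lambda,\lambda_1,\lambda_2\in\Lambda$, $\theta\in[0,1]$. Generic accelerated BPP (acc-BPP): given $\lambda_0\in\Lambda$, $v_0=\lambda_0$, $A_0=A>0$, $\eta_k>0$, set $\phi_0(\lambda)=d(\lambda_0)-AD_h(\lambda,\lambda_0)$, and for $k\ge0$: $\theta_k\in(0,1)$ is the positive root of $\theta^2=\eta_kA_k(1-\theta)/G$, i.e. $\theta_k=\frac{\sqrt{(A_k\eta_k/G)^2+4A_k\eta_k/G}-A_k\eta_k/G}{2}$;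 $y_k=\theta_kv_k+(1-\theta_k)\lambda_k$; $\lambda_{k+1}\in\arg\max_{\lambda\in\Lambda}\{d(\lambda)-\frac1{\eta_k}D_h(\lambda,y_k)\}$; $A_{k+1}=(1-\theta_k)A_k$; $\phi_{k+1}(\lambda)=(1-\theta_k)\phi_k(\lambda)+\theta_k\big(d(\lambda_{k+1})+\frac1{\eta_k}(\nabla h(\lambda_{k+1})-\nabla h(y_k))^\top(\lambda-\lambda_{k+1})\big)$; $v_{k+1}\in\arg\max_{\lambda\in\Lambda}\phi_{k+1}(\lambda)$. All maximizers are assumed to exist. *)

theory Defs
  imports "HOL-Analysis.Analysis"
begin

definition strictly_convex_on :: "'a::real_vector set \<Rightarrow> ('a \<Rightarrow> real) \<Rightarrow> bool" where
  "strictly_convex_on S f \<longleftrightarrow>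
     (\<forall>x\<in>S. \<forall>y\<in>S. \<forall>t::real. x \<noteq> y \<and> 0 < t \<and> t < 1 \<longrightarrow>
        f ((1 - t) *\<^sub>R x + t *\<^sub>R y) < (1 - t) * f x + t * f y)"

definition bregman :: "('a::real_inner \<Rightarrow> real) \<Rightarrow> ('a \<Rightarrow> 'a) \<Rightarrow> 'a \<Rightarrow> 'a \<Rightarrow> real" where
  "bregman h gh l lt = h l - h lt - gh lt \<bullet> (l - lt)"

primrec acc_phi ::
  "('a::real_inner \<Rightarrow> real) \<Rightarrow> ('a \<Rightarrow> real) \<Rightarrow> ('a \<Rightarrow> 'a) \<Rightarrow> real \<Rightarrow>
   (nat \<Rightarrow> 'a) \<Rightarrow> (nat \<Rightarrow> 'a) \<Rightarrow> (nat \<Rightarrow> real) \<Rightarrow> (nat \<Rightarrow> real) \<Rightarrow> nat \<Rightarrow> 'a \<Rightarrow> real" where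
  "acc_phi d h gh A lam y eta theta 0 = (\<lambda>l. d (lam 0) - A * bregman h gh l (lam 0))"
| "acc_phi d h gh A lam y eta theta (Suc k) = (\<lambda>l.
      (1 - theta k) * acc_phi d h gh A lam y eta theta k l
      + theta k * (d (lam (Suc k))
          + (1 / eta k) * ((gh (lam (Suc k)) - gh (y k)) \<bullet> (l - lam (Suc k)))))"

end

theory Submission
  imports Defs
begin

text \<open>
  Nesterov's estimate-sequence argument. The functions \<open>\<phi>\<^sub>k\<close> satisfy two invariants on \<open>\<Lambda>\<close>.
  First, \<open>\<phi>\<^sub>k \<ge> (1 - A\<^sub>k/A) d + (A\<^sub>k/A) \<phi>\<^sub>0\<close>, because the piece added to \<open>\<phi>\<^sub>k\<^sub>+\<^sub>1\<close> is a
  linear majorant of the concave \<open>d\<close>, read off from the optimality condition of the proximal step.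
  Second, \<open>max \<phi>\<^sub>k = \<phi>\<^sub>k(v\<^sub>k) \<le> d(\<lambda>\<^sub>k)\<close>. In its inductive step the triangle scaling property bounds
  \<open>D\<^sub>h(z, y\<^sub>k)\<close> for \<open>z = (1-\<theta>\<^sub>k)\<lambda>\<^sub>k + \<theta>\<^sub>k\<lambda>\<close> by \<open>G\<theta>\<^sub>k\<^sup>2 D\<^sub>h(\<lambda>, v\<^sub>k) = \<eta>\<^sub>k (1-\<theta>\<^sub>k) A\<^sub>k D\<^sub>h(\<lambda>, v\<^sub>k)\<close>,
  and this is exactly absorbed by \<open>\<phi>\<^sub>k(\<lambda>) \<le> \<phi>\<^sub>k(v\<^sub>k) - A\<^sub>k D\<^sub>h(\<lambda>, v\<^sub>k)\<close>, which holds because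
  \<open>\<phi>\<^sub>k + A\<^sub>k h\<close> is concave and maximized at \<open>v\<^sub>k\<close>.
  Together they give the first inequality, with \<open>\<Prod>(1-\<theta>\<^sub>k) = A\<^sub>T/A\<close>. For the rate, \<open>\<theta>\<^sub>k\<^sup>2 = \<eta>\<^sub>k A\<^sub>k\<^sub>+\<^sub>1/G\<close>
  places \<open>1/\<surd>A\<^sub>k\<^sub>+\<^sub>1 - 1/\<surd>A\<^sub>k\<close> between \<open>\<surd>(\<eta>\<^sub>k/G)/2\<close> and \<open>\<surd>(\<eta>\<^sub>k/G)\<close>.
\<close>

lemma segment_difference_quotient_tendsto:
  fixes h :: "'a::real_inner \<Rightarrow> real"
  assumes S: "convex S" and x: "x \<in> S" and l: "l \<in> S"
    and h: "(h has_derivative (\<lambda>u. g \<bullet> u)) (at x within S)"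
  shows "((\<lambda>t. (h (x + t *\<^sub>R (l - x)) - h x) / t) \<longlongrightarrow> g \<bullet> (l - x)) (at_right 0)"
proof -
  let ?p = "\<lambda>t::real. x + t *\<^sub>R (l - x)"
  have "?p ` {0..1} \<subseteq> S"
  proof
    fix z assume "z \<in> ?p ` {0..1}"
    then obtain t where "0 \<le> t" "t \<le> 1" "z = (1 - t) *\<^sub>R x + t *\<^sub>R l"
      by (auto simp: algebra_simps)
    then show "z \<in> S" using S x l by (simp add: convex_alt)
  qed
  then have "(h has_derivative (\<lambda>u. g \<bullet> u)) (at (?p 0) within ?p ` {0..1})"
    using has_derivative_subset[OF h] by simp
  moreover have "(?p has_derivative (\<lambda>s. s *\<^sub>R (l - x))) (at 0 within {0..1})"
    by (auto intro!: derivative_eq_intros)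
  ultimately have "((\<lambda>t. h (?p t)) has_derivative (\<lambda>s. (g \<bullet> (l - x)) * s)) (at 0 within {0..1})"
    using has_derivative_in_compose by (fastforce simp: mult.commute)
  then have "((\<lambda>t. h (?p t)) has_field_derivative (g \<bullet> (l - x))) (at 0 within {0..1})"
    by (simp add: has_field_derivative_def)
  then show ?thesis
    by (simp add: has_field_derivative_iff at_within_Icc_at_right)
qed

lemma concave_maximizer_first_order:
  fixes f h :: "'a::real_inner \<Rightarrow> real"
  assumes f: "concave_on S f" and a: "a > 0" and x: "x \<in> S" and l: "l \<in> S"
    and h: "(h has_derivative (\<lambda>u. g \<bullet> u)) (at x within S)"
    and max: "\<And>z. z \<in> S \<Longrightarrow> f z - a * h z \<le> f x - a * h x"
  shows "f l - f x \<le> a * (g \<bullet> (l - x))"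
proof -
  have S: "convex S" using f by (rule concave_on_imp_convex)
  have "(f l - f x) / a \<le> (h (x + t *\<^sub>R (l - x)) - h x) / t" if t: "t \<in> {0<..<1}" for t
  proof -
    let ?z = "(1 - t) *\<^sub>R x + t *\<^sub>R l"
    have "(1 - t) * f x + t * f l \<le> f ?z" using concave_onD[OF f] t x l by simp
    moreover have "f ?z - a * h ?z \<le> f x - a * h x" using max S x l t by (simp add: convex_alt)
    ultimately have "t * (f l - f x) \<le> a * (h ?z - h x)" by (simp add: algebra_simps)
    moreover have "x + t *\<^sub>R (l - x) = ?z" by (simp add: algebra_simps)
    ultimately show ?thesis using a t by (simp add: field_simps mult.commute)
  qed
  then have "(f l - f x) / a \<le> g \<bullet> (l - x)"
    by (intro tendsto_lowerbound[OF segment_difference_quotient_tendsto[OF S x l h]])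
      (auto intro: eventually_mono[OF eventually_at_right_real[of 0 1]])
  then show ?thesis using a by (simp add: divide_simps mult.commute)
qed

lemma bregman_nonneg:
  fixes h :: "'a::real_inner \<Rightarrow> real"
  assumes h: "convex_on S h" and x: "x \<in> S" and l: "l \<in> S"
    and dh: "(h has_derivative (\<lambda>u. gh x \<bullet> u)) (at x within S)"
  shows "0 \<le> bregman h gh l x"
proof -
  have S: "convex S" using h by (rule convex_on_imp_convex)
  have "(h (x + t *\<^sub>R (l - x)) - h x) / t \<le> h l - h x" if t: "t \<in> {0<..<1}" for t
  proof -
    have "h ((1 - t) *\<^sub>R x + t *\<^sub>R l) \<le> (1 - t) * h x + t * h l"
      using convex_onD[OF h] t x l by simp
    moreover have "x + t *\<^sub>R (l - x) = (1 - t) *\<^sub>R x + t *\<^sub>R l" by (simp add: algebra_simps)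
    ultimately show ?thesis using t by (simp add: field_simps)
  qed
  then have "gh x \<bullet> (l - x) \<le> h l - h x"
    by (intro tendsto_upperbound[OF segment_difference_quotient_tendsto[OF S x l dh]])
      (auto intro: eventually_mono[OF eventually_at_right_real[of 0 1]])
  then show ?thesis by (simp add: bregman_def)
qed

lemma bregman_three_point:
  "(gh a - gh b) \<bullet> (c - a) = bregman h gh c b - bregman h gh a b - bregman h gh c a"
  by (simp add: bregman_def inner_diff_right inner_diff_left algebra_simps)

lemma strictly_convex_on_imp_convex_on:
  assumes "convex S" and "strictly_convex_on S h"
  shows "convex_on S h"
proof (rule convex_onI[OF _ assms(1)])
  fix t :: real and x y assume "0 < t" "t < 1" "x \<in> S" "y \<in> S"
  then show "h ((1 - t) *\<^sub>R x + t *\<^sub>R y) \<le> (1 - t) * h x + t * h y"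
    using assms(2) unfolding strictly_convex_on_def
    by (cases "x = y") (auto simp: algebra_simps less_imp_le)
qed

lemma concave_on_affine:
  fixes w :: "'a::real_inner"
  assumes "convex S"
  shows "concave_on S (\<lambda>l. c + w \<bullet> l)"
proof -
  have "u * (c + w \<bullet> x) + v * (c + w \<bullet> y) = (u + v) * c + w \<bullet> (u *\<^sub>R x + v *\<^sub>R y)"
    for u v :: real and x y by (simp add: inner_add_right algebra_simps)
  then show ?thesis using assms by (simp add: concave_on_iff)
qed

lemma quadratic_positive_root:
  fixes p :: real
  assumes p: "p > 0"
  defines "\<theta> \<equiv> (sqrt (p\<^sup>2 + 4 * p) - p) / 2"
  shows "0 < \<theta>" and "\<theta> < 1" and "\<theta>\<^sup>2 = p * (1 - \<theta>)"
proof -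
  define s where "s = sqrt (p\<^sup>2 + 4 * p)"
  have s2: "s\<^sup>2 = p\<^sup>2 + 4 * p" unfolding s_def using p by simp
  have "p = sqrt (p\<^sup>2)" using p by simp
  also have "\<dots> < s" unfolding s_def using p by (intro real_sqrt_less_mono) simp
  finally have "p < s" .
  then show "0 < \<theta>" unfolding \<theta>_def s_def[symmetric] by simp
  have "s < sqrt ((p + 2)\<^sup>2)"
    unfolding s_def by (intro real_sqrt_less_mono) (simp add: power2_eq_square algebra_simps)
  also have "\<dots> = p + 2" using p by simp
  finally show "\<theta> < 1" unfolding \<theta>_def s_def[symmetric] by simp
  show "\<theta>\<^sup>2 = p * (1 - \<theta>)"
    unfolding \<theta>_def s_def[symmetric] using s2 by (simp add: field_simps power2_eq_square)
qed

lemma reciprocal_gap_bounds: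
  fixes x z q :: real
  assumes z: "0 < z" and zx: "z \<le> x" and q: "q \<ge> 0" and gap: "x\<^sup>2 - z\<^sup>2 = q * z * x\<^sup>2"
  shows "q / 2 \<le> 1 / z - 1 / x" and "1 / z - 1 / x \<le> q"
proof -
  have x: "x > 0" using z zx by simp
  have "1 / z - 1 / x - q * x / (x + z) = ((x\<^sup>2 - z\<^sup>2) - q * z * x\<^sup>2) / (x * z * (x + z))"
    using x z by (simp add: field_simps power2_eq_square)
  then have eq: "1 / z - 1 / x = q * x / (x + z)"
    unfolding gap by simp
  show "q / 2 \<le> 1 / z - 1 / x" unfolding eq using zx x q z by (simp add: field_simps mult_left_mono)
  show "1 / z - 1 / x \<le> q" unfolding eq using x q z by (simp add: field_simps mult_left_mono)
qed

locale acc_bpp =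
  fixes \<Lambda> :: "'a::real_inner set"
    and d h :: "'a \<Rightarrow> real"
    and gh :: "'a \<Rightarrow> 'a"
    and G A :: real
    and lam v y :: "nat \<Rightarrow> 'a"
    and Aseq eta theta :: "nat \<Rightarrow> real"
  assumes d_concave: "concave_on \<Lambda> d"
    and h_convex: "convex_on \<Lambda> h"
    and h_deriv: "\<And>x. x \<in> \<Lambda> \<Longrightarrow> (h has_derivative (\<lambda>u. gh x \<bullet> u)) (at x within \<Lambda>)"
    and G_pos: "G > 0"
    and triangle_scaling: "\<And>l l1 l2 t. \<lbrakk>l \<in> \<Lambda>; l1 \<in> \<Lambda>; l2 \<in> \<Lambda>; 0 \<le> t; t \<le> 1\<rbrakk> \<Longrightarrow>
        bregman h gh ((1 - t) *\<^sub>R l + t *\<^sub>R l1) ((1 - t) *\<^sub>R l + t *\<^sub>R l2)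
          \<le> G * t\<^sup>2 * bregman h gh l1 l2"
    and lam0_in: "lam 0 \<in> \<Lambda>"
    and v0: "v 0 = lam 0"
    and A_pos: "A > 0"
    and Aseq0: "Aseq 0 = A"
    and eta_pos: "\<And>k. eta k > 0"
    and theta_def: "\<And>k. theta k =
        (sqrt ((Aseq k * eta k / G)\<^sup>2 + 4 * Aseq k * eta k / G) - Aseq k * eta k / G) / 2"
    and y_def: "\<And>k. y k = theta k *\<^sub>R v k + (1 - theta k) *\<^sub>R lam k"
    and lam_Suc_in: "\<And>k. lam (Suc k) \<in> \<Lambda>"
    and lam_Suc_max: "\<And>k l. l \<in> \<Lambda> \<Longrightarrow> d l - (1 / eta k) * bregman h gh l (y k)
           \<le> d (lam (Suc k)) - (1 / eta k) * bregman h gh (lam (Suc k)) (y k)"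
    and Aseq_Suc: "\<And>k. Aseq (Suc k) = (1 - theta k) * Aseq k"
    and v_Suc_in: "\<And>k. v (Suc k) \<in> \<Lambda>"
    and v_Suc_max: "\<And>k l. l \<in> \<Lambda> \<Longrightarrow> acc_phi d h gh A lam y eta theta (Suc k) l
           \<le> acc_phi d h gh A lam y eta theta (Suc k) (v (Suc k))"
begin

abbreviation phi :: "nat \<Rightarrow> 'a \<Rightarrow> real" where
  "phi \<equiv> acc_phi d h gh A lam y eta theta"

lemma convex: "convex \<Lambda>"
  using d_concave by (rule concave_on_imp_convex)

lemma bregman_nonneg_on: "x \<in> \<Lambda> \<Longrightarrow> l \<in> \<Lambda> \<Longrightarrow> 0 \<le> bregman h gh l x"
  by (rule bregman_nonneg[OF h_convex _ _ h_deriv])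

lemma theta_root:
  assumes "Aseq k > 0"
  shows "0 < theta k" "theta k < 1" "(theta k)\<^sup>2 = (Aseq k * eta k / G) * (1 - theta k)"
proof -
  let ?p = "Aseq k * eta k / G"
  have p: "?p > 0" using assms eta_pos[of k] G_pos by simp
  have th: "theta k = (sqrt (?p\<^sup>2 + 4 * ?p) - ?p) / 2" by (simp add: theta_def mult.assoc)
  show "0 < theta k" unfolding th by (fact quadratic_positive_root(1)[OF p])
  show "theta k < 1" unfolding th by (fact quadratic_positive_root(2)[OF p])
  show "(theta k)\<^sup>2 = ?p * (1 - theta k)" unfolding th by (fact quadratic_positive_root(3)[OF p])
qed

lemma Aseq_pos: "Aseq k > 0"
  by (induction k) (simp_all add: Aseq0 A_pos Aseq_Suc theta_root)

lemmas theta_pos = theta_root(1)[OF Aseq_pos]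
  and theta_less_1 = theta_root(2)[OF Aseq_pos]
  and theta_square = theta_root(3)[OF Aseq_pos]

lemma lam_in: "lam k \<in> \<Lambda>"
  by (cases k) (simp_all add: lam0_in lam_Suc_in)

lemma v_in: "v k \<in> \<Lambda>"
  by (cases k) (simp_all add: lam0_in v0 v_Suc_in)

lemma y_eq: "y k = (1 - theta k) *\<^sub>R lam k + theta k *\<^sub>R v k"
  by (simp add: y_def add.commute)

lemma y_in: "y k \<in> \<Lambda>"
  using convex lam_in v_in theta_pos[of k] theta_less_1[of k] by (simp add: y_eq convex_alt)

lemma d_le_prox_linearization:
  assumes l: "l \<in> \<Lambda>"
  shows "d l \<le> d (lam (Suc k)) + (1 / eta k) * ((gh (lam (Suc k)) - gh (y k)) \<bullet> (l - lam (Suc k)))"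
proof -
  let ?a = "1 / eta k" and ?L = "lam (Suc k)"
  let ?f = "\<lambda>z. d z + (0 + (?a *\<^sub>R gh (y k)) \<bullet> z)"
  have shift: "?f z - ?a * h z = d z - ?a * bregman h gh z (y k) - ?a * (h (y k) - gh (y k) \<bullet> y k)"
    for z by (simp add: bregman_def inner_diff_right algebra_simps)
  have "?f z - ?a * h z \<le> ?f ?L - ?a * h ?L" if "z \<in> \<Lambda>" for z
    unfolding shift using lam_Suc_max[OF that, of k] by simp
  then have "?f l - ?f ?L \<le> ?a * (gh ?L \<bullet> (l - ?L))"
    using eta_pos[of k]
    by (intro concave_maximizer_first_order[OF _ _ lam_Suc_in l h_deriv[OF lam_Suc_in]]
        concave_on_add d_concave concave_on_affine convex) auto
  then show ?thesis by (simp add: inner_diff_right inner_diff_left algebra_simps)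
qed

lemma phi_plus_Aseq_h_concave: "concave_on \<Lambda> (\<lambda>l. phi k l + Aseq k * h l)"
proof (induction k)
  case 0
  have "(\<lambda>l. phi 0 l + Aseq 0 * h l)
      = (\<lambda>l. (d (lam 0) + A * h (lam 0) - A * (gh (lam 0) \<bullet> lam 0)) + (A *\<^sub>R gh (lam 0)) \<bullet> l)"
    by (simp add: Aseq0 bregman_def inner_diff_right algebra_simps)
  then show ?case using concave_on_affine[OF convex] by (simp only:)
next
  case (Suc k)
  let ?g = "gh (lam (Suc k)) - gh (y k)"
  have "(\<lambda>l. phi (Suc k) l + Aseq (Suc k) * h l)
      = (\<lambda>l. (1 - theta k) * (phi k l + Aseq k * h l)
          + theta k * ((d (lam (Suc k)) - (1 / eta k) * (?g \<bullet> lam (Suc k))) + ((1 / eta k) *\<^sub>R ?g) \<bullet> l))"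
    by (simp add: Aseq_Suc inner_diff_right algebra_simps)
  moreover have "concave_on \<Lambda> (\<lambda>l. (1 - theta k) * (phi k l + Aseq k * h l) + theta k * (c + w \<bullet> l))"
    for c w using theta_pos[of k] theta_less_1[of k]
    by (intro concave_on_add concave_on_cmul[OF _ Suc] concave_on_cmul[OF _ concave_on_affine[OF convex]])
      auto
  ultimately show ?case by (simp only:)
qed

lemma phi_le_phi_v: "l \<in> \<Lambda> \<Longrightarrow> phi k l \<le> phi k (v k)"
  using bregman_nonneg_on[OF lam0_in, of l] A_pos v_Suc_max
  by (cases k) (simp_all add: v0 bregman_def)

lemma phi_le_phi_v_minus_bregman:
  assumes l: "l \<in> \<Lambda>"
  shows "phi k l \<le> phi k (v k) - Aseq k * bregman h gh l (v k)"
proof -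
  have "(phi k l + Aseq k * h l) - (phi k (v k) + Aseq k * h (v k)) \<le> Aseq k * (gh (v k) \<bullet> (l - v k))"
    using phi_le_phi_v Aseq_pos
    by (intro concave_maximizer_first_order[OF phi_plus_Aseq_h_concave _ v_in l h_deriv[OF v_in]]) auto
  then show ?thesis by (simp add: bregman_def algebra_simps)
qed

lemma phi_lower_bound:
  assumes l: "l \<in> \<Lambda>"
  shows "(1 - Aseq k / A) * d l + (Aseq k / A) * phi 0 l \<le> phi k l"
proof (induction k)
  case 0 then show ?case using Aseq0 A_pos by simp
next
  case (Suc k)
  have "(1 - Aseq (Suc k) / A) * d l + (Aseq (Suc k) / A) * phi 0 l
      = (1 - theta k) * ((1 - Aseq k / A) * d l + (Aseq k / A) * phi 0 l) + theta k * d l"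
    using A_pos by (simp add: Aseq_Suc field_simps)
  also have "\<dots> \<le> (1 - theta k) * phi k l + theta k * (d (lam (Suc k))
          + (1 / eta k) * ((gh (lam (Suc k)) - gh (y k)) \<bullet> (l - lam (Suc k))))"
    using Suc theta_pos[of k] theta_less_1[of k] d_le_prox_linearization[OF l, of k]
    by (intro add_mono mult_left_mono) auto
  also have "\<dots> = phi (Suc k) l" by simp
  finally show ?case .
qed

lemma phi_v_le_d: "phi k (v k) \<le> d (lam k)"
proof (induction k)
  case 0 then show ?case using v0 by (simp add: bregman_def)
next
  case (Suc k)
  let ?t = "theta k" and ?e = "eta k" and ?L = "lam (Suc k)" and ?g = "gh (lam (Suc k)) - gh (y k)"
  have "phi (Suc k) l \<le> d ?L" if l: "l \<in> \<Lambda>" for l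
  proof -
    define z where "z = (1 - ?t) *\<^sub>R lam k + ?t *\<^sub>R l"
    have z: "z \<in> \<Lambda>" unfolding z_def
      using convex lam_in l theta_pos[of k] theta_less_1[of k] by (simp add: convex_alt)
    have "phi k l \<le> d (lam k) - Aseq k * bregman h gh l (v k)"
      using phi_le_phi_v_minus_bregman[OF l, of k] Suc by simp
    also have "d (lam k) \<le> d ?L + (1 / ?e) * (?g \<bullet> (lam k - ?L))"
      by (rule d_le_prox_linearization[OF lam_in])
    finally have "phi (Suc k) l \<le> (1 - ?t) * (d ?L + (1 / ?e) * (?g \<bullet> (lam k - ?L)) - Aseq k * bregman h gh l (v k))
        + ?t * (d ?L + (1 / ?e) * (?g \<bullet> (l - ?L)))"
      using theta_less_1[of k] by (simp add: mult_left_mono)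
    also have "\<dots> = d ?L + (1 / ?e) * ((1 - ?t) * (?g \<bullet> (lam k - ?L)) + ?t * (?g \<bullet> (l - ?L)))
        - (1 - ?t) * Aseq k * bregman h gh l (v k)"
      by (simp only: algebra_simps)
    also have "(1 - ?t) * (?g \<bullet> (lam k - ?L)) + ?t * (?g \<bullet> (l - ?L)) = ?g \<bullet> (z - ?L)"
      unfolding z_def by (simp add: inner_diff_right inner_add_right algebra_simps)
    also have "?g \<bullet> (z - ?L) \<le> bregman h gh z (y k)"
      using bregman_three_point[of gh ?L "y k" z h] bregman_nonneg_on[OF y_in[of k] lam_Suc_in[of k]]
        bregman_nonneg_on[OF lam_Suc_in[of k] z] by linarith
    also have "bregman h gh z (y k) \<le> G * ?t\<^sup>2 * bregman h gh l (v k)"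
      unfolding z_def y_eq using theta_pos[of k] theta_less_1[of k]
      by (intro triangle_scaling lam_in l v_in) simp_all
    also have "G * ?t\<^sup>2 = ?e * ((1 - ?t) * Aseq k)" using theta_square[of k] G_pos by (simp add: field_simps)
    finally show ?thesis using eta_pos[of k] by (simp add: field_simps)
  qed
  then show ?case using v_Suc_in by blast
qed

lemma estimate_sequence_bound:
  assumes l: "l \<in> \<Lambda>"
  shows "d l - d (lam n) \<le> Aseq n / A * (d l - d (lam 0) + A * bregman h gh l (lam 0))"
proof -
  have "(1 - Aseq n / A) * d l + (Aseq n / A) * phi 0 l \<le> phi n l" by (rule phi_lower_bound[OF l])
  also have "\<dots> \<le> phi n (v n)" by (rule phi_le_phi_v[OF l])
  also have "\<dots> \<le> d (lam n)" by (rule phi_v_le_d)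
  finally have "(1 - Aseq n / A) * d l + (Aseq n / A) * phi 0 l \<le> d (lam n)" .
  then show ?thesis using A_pos by (simp add: algebra_simps)
qed

lemma prod_one_minus_theta: "(\<Prod>k<n. 1 - theta k) = Aseq n / A"
  using A_pos by (induction n) (simp_all add: Aseq0 Aseq_Suc)

lemma sqrt_ratio_increment_bounds:
  "(1/2) * sqrt (A / G) * sqrt (eta k) \<le> sqrt (A / Aseq (Suc k)) - sqrt (A / Aseq k)"
  "sqrt (A / Aseq (Suc k)) - sqrt (A / Aseq k) \<le> sqrt (A / G) * sqrt (eta k)"
proof -
  define x where "x = sqrt (Aseq k)"
  define z where "z = sqrt (Aseq (Suc k))"
  define q where "q = sqrt (eta k / G)"
  have x2: "x\<^sup>2 = Aseq k" and z2: "z\<^sup>2 = Aseq (Suc k)" and z: "z > 0"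
    using Aseq_pos unfolding x_def z_def by (simp_all add: less_imp_le)
  have zx: "z \<le> x" unfolding z_def x_def using Aseq_pos[of k] theta_pos[of k]
    by (intro real_sqrt_le_mono) (simp add: Aseq_Suc mult_left_le_one_le)
  have q: "q \<ge> 0" unfolding q_def using eta_pos[of k] G_pos by simp
  have "(theta k)\<^sup>2 = (eta k / G) * z\<^sup>2" using theta_square[of k] by (simp add: z2 Aseq_Suc field_simps)
  then have "sqrt ((eta k / G) * z\<^sup>2) = theta k"
    using theta_pos[of k] by (intro real_sqrt_unique) simp_all
  then have "theta k = q * sqrt (z\<^sup>2)" unfolding q_def by (simp only: real_sqrt_mult)
  then have "theta k = q * z" using z by simp
  then have "x\<^sup>2 - z\<^sup>2 = q * z * x\<^sup>2" unfolding x2 z2 Aseq_Suc by (simp add: algebra_simps)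
  note gap = reciprocal_gap_bounds[OF z zx q this]
  have "sqrt (A / Aseq (Suc k)) - sqrt (A / Aseq k) = sqrt A * (1 / z - 1 / x)"
    unfolding x_def z_def by (simp add: real_sqrt_divide algebra_simps)
  moreover have "sqrt A * q = sqrt (A / G) * sqrt (eta k)"
    unfolding q_def by (simp add: real_sqrt_divide)
  ultimately show "(1/2) * sqrt (A / G) * sqrt (eta k) \<le> sqrt (A / Aseq (Suc k)) - sqrt (A / Aseq k)"
    and "sqrt (A / Aseq (Suc k)) - sqrt (A / Aseq k) \<le> sqrt (A / G) * sqrt (eta k)"
    using mult_left_mono[OF gap(1), of "sqrt A"] mult_left_mono[OF gap(2), of "sqrt A"] A_pos
    by (simp_all add: algebra_simps)
qed

lemma sqrt_ratio_bounds:
  "1 + (1/2) * sqrt (A / G) * (\<Sum>k<n. sqrt (eta k)) \<le> sqrt (A / Aseq n)"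
  "sqrt (A / Aseq n) \<le> 1 + sqrt (A / G) * (\<Sum>k<n. sqrt (eta k))"
proof (induction n)
  case 0
  show "1 + (1/2) * sqrt (A / G) * (\<Sum>k<0. sqrt (eta k)) \<le> sqrt (A / Aseq 0)"
    and "sqrt (A / Aseq 0) \<le> 1 + sqrt (A / G) * (\<Sum>k<0. sqrt (eta k))"
    using Aseq0 A_pos by simp_all
next
  case (Suc n)
  show "1 + (1/2) * sqrt (A / G) * (\<Sum>k<Suc n. sqrt (eta k)) \<le> sqrt (A / Aseq (Suc n))"
    and "sqrt (A / Aseq (Suc n)) \<le> 1 + sqrt (A / G) * (\<Sum>k<Suc n. sqrt (eta k))"
    using Suc sqrt_ratio_increment_bounds[of n] by (simp_all add: algebra_simps)
qed

lemma prod_one_minus_theta_bounds: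
  "1 / (1 + sqrt (A / G) * (\<Sum>k<n. sqrt (eta k)))\<^sup>2 \<le> (\<Prod>k<n. 1 - theta k)"
  "(\<Prod>k<n. 1 - theta k) \<le> 1 / (1 + (1/2) * sqrt (A / G) * (\<Sum>k<n. sqrt (eta k)))\<^sup>2"
proof -
  define r where "r = sqrt (A / Aseq n)"
  define S where "S = (\<Sum>k<n. sqrt (eta k))"
  have "S \<ge> 0" unfolding S_def using eta_pos by (simp add: sum_nonneg less_imp_le)
  then have one_le: "1 \<le> 1 + (1/2) * sqrt (A / G) * S" using A_pos G_pos by simp
  have r: "1 + (1/2) * sqrt (A / G) * S \<le> r" "r \<le> 1 + sqrt (A / G) * S"
    using sqrt_ratio_bounds[of n] unfolding r_def S_def by auto
  have prod_eq: "(\<Prod>k<n. 1 - theta k) = 1 / r\<^sup>2"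
    unfolding prod_one_minus_theta r_def using Aseq_pos[of n] A_pos by simp
  have "r\<^sup>2 \<le> (1 + sqrt (A / G) * S)\<^sup>2" and "(1 + (1/2) * sqrt (A / G) * S)\<^sup>2 \<le> r\<^sup>2"
    using r one_le by (simp_all add: power_mono)
  then show "1 / (1 + sqrt (A / G) * (\<Sum>k<n. sqrt (eta k)))\<^sup>2 \<le> (\<Prod>k<n. 1 - theta k)"
    and "(\<Prod>k<n. 1 - theta k) \<le> 1 / (1 + (1/2) * sqrt (A / G) * (\<Sum>k<n. sqrt (eta k)))\<^sup>2"
    unfolding prod_eq S_def[symmetric] using r one_le by (simp_all add: frac_le)
qed

end

text \<open>The bound holds with any point of \<open>\<Lambda>\<close> in place of \<open>\<lambda>\<^sup>*\<close>.\<close>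

theorem mainTheorem6:
  fixes \<Lambda> :: "(real ^ 'm) set"
    and d h :: "real ^ 'm \<Rightarrow> real"
    and gh :: "real ^ 'm \<Rightarrow> real ^ 'm"
    and lamstar :: "real ^ 'm"
    and G A :: real
    and lam v y :: "nat \<Rightarrow> real ^ 'm"
    and Aseq eta theta :: "nat \<Rightarrow> real"
    and T :: nat
  assumes closed: "closed \<Lambda>" and convex: "convex \<Lambda>"
    and d_concave: "concave_on \<Lambda> d"
    and lamstar_in: "lamstar \<in> \<Lambda>"
    and lamstar_max: "\<forall>l\<in>\<Lambda>. d l \<le> d lamstar"
    and h_strict: "strictly_convex_on \<Lambda> h"
    and h_deriv: "\<forall>x\<in>\<Lambda>. (h has_derivative (\<lambda>u. gh x \<bullet> u)) (at x within \<Lambda>)"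
    and gh_cont: "continuous_on \<Lambda> gh"
    and G_pos: "G > 0"
    and TSP: "\<forall>l\<in>\<Lambda>. \<forall>l1\<in>\<Lambda>. \<forall>l2\<in>\<Lambda>. \<forall>t::real. 0 \<le> t \<and> t \<le> 1 \<longrightarrow>
        bregman h gh ((1 - t) *\<^sub>R l + t *\<^sub>R l1) ((1 - t) *\<^sub>R l + t *\<^sub>R l2)
          \<le> G * t\<^sup>2 * bregman h gh l1 l2"
    and lam0_in: "lam 0 \<in> \<Lambda>"
    and v0: "v 0 = lam 0"
    and A_pos: "A > 0"
    and A0: "Aseq 0 = A"
    and eta_pos: "\<forall>k. eta k > 0"
    and theta_def: "\<forall>k. theta k =
        (sqrt ((Aseq k * eta k / G)\<^sup>2 + 4 * Aseq k * eta k / G) - Aseq k * eta k / G) / 2"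
    and y_def: "\<forall>k. y k = theta k *\<^sub>R v k + (1 - theta k) *\<^sub>R lam k"
    and lam_step: "\<forall>k. lam (Suc k) \<in> \<Lambda> \<and>
        (\<forall>l\<in>\<Lambda>. d l - (1 / eta k) * bregman h gh l (y k)
           \<le> d (lam (Suc k)) - (1 / eta k) * bregman h gh (lam (Suc k)) (y k))"
    and Aseq_step: "\<forall>k. Aseq (Suc k) = (1 - theta k) * Aseq k"
    and v_step: "\<forall>k. v (Suc k) \<in> \<Lambda> \<and>
        (\<forall>l\<in>\<Lambda>. acc_phi d h gh A lam y eta theta (Suc k) l
           \<le> acc_phi d h gh A lam y eta theta (Suc k) (v (Suc k)))"
    and T_ge: "T \<ge> 1"
  shows "d lamstar - d (lam T)
           \<le> (\<Prod>k<T. 1 - theta k) * (d lamstar - d (lam 0) + A * bregman h gh lamstar (lam 0))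
         \<and> 1 / (1 + sqrt (A / G) * (\<Sum>k<T. sqrt (eta k)))\<^sup>2 \<le> (\<Prod>k<T. 1 - theta k)
         \<and> (\<Prod>k<T. 1 - theta k) \<le> 1 / (1 + (1/2) * sqrt (A / G) * (\<Sum>k<T. sqrt (eta k)))\<^sup>2"
proof -
  have "convex_on \<Lambda> h" using convex h_strict by (rule strictly_convex_on_imp_convex_on)
  then interpret acc_bpp \<Lambda> d h gh G A lam v y Aseq eta theta
    by unfold_locales (use assms in blast)+
  show ?thesis
    using estimate_sequence_bound[OF lamstar_in, of T] prod_one_minus_theta[of T]
      prod_one_minus_theta_bounds[of T] A0 by simp
qed

end
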